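(* Let $A=\mathbb{S}\mathbb{O}$, $f\in\mathcal{S}(\Omega)$ and $x\in\Omega$. Then one of the following possibilities applies: (1) $V(f)\cap\mathbb{S}_x=\emptyset$; (2) $V(f)\cap\mathbb{S}_x=\{y\}$, $f'_s(x)\in C_A^*=\mathbb{S}\mathbb{O}\setminus n^{-1}(0)$ and $y=\mathrm{re}(x)-f^\circ_s(x)f'_s(x)^{-1}$; (3) $V(f)\cap\mathbb{S}_x$ is an affine $2$-plane in $\mathbb{S}\mathbb{O}\simeq\mathbb{R}^8$ and $f'_s(x)$ is a zero divisor (i.e., it is a nonzero element of $n^{-1}(0)$); (4) $V(f)\supseteq\mathbb{S}_x$ and $f'_s(x)=0$. In each of these cases, respectively: (1) either $V(N(f))\cap\mathbb{S}_x=\emptyset=V(f^c)\cap\mathbb{S}_x$; or $V(N(f))\supseteq\mathbb{S}_x$ and $V(f^c)\cap\mathbb{S}_x$ is either empty or $2$-dimensional; (2) $V(N(f))\supseteq\mathbb{S}_x$ and $V(f^c)\cap\mathbb{S}_x=\{f'_s(x)^{-1}y^cf'_s(x)\}$; (3) $V(N(f))\supseteq\mathbb{S}_x$ and $V(f^c)\cap\mathbb{S}_x$ is either empty or $2$-dimensional; (4) $\mathbb{S}_x$ is included both in $V(f^c)$ and in $V(N(f))$.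
   Context: $\mathbb{S}\mathbb{O}$ (split-octonions) is the real algebra $\mathbb{H}+l\mathbb{H}$ ($\mathbb{H}$ the quaternions) with product determined by $(lp)(lq)=qp^c$, $p(lq)=l(p^cq)$, $(lp)q=l(qp)$ for $p,q\in\mathbb{H}$ ($p^c$ the quaternionic conjugate), and $^*$-involution $(p+lq)^c=p^c-lq$; it is an alternative $^*$-algebra with norm $n(x)=xx^c$, $n(p+lq)=n(p)-n(q)$. For a real finite-dimensional unital alternative $^*$-algebra $A$: $t(x)=x+x^c$; center $=\{r:(r,a,b)=0,\ ra=ar\ \forall a,b\}$; $C_A=\{0\}\cup\{a:n(a),n(a^c)$ invertible elements of the center$\}$, $C_A^*=C_A\setminus\{0\}$. $\mathbb{S}_A=\{J:t(J)=0,n(J)=1\}$, $Q_A=\mathbb{R}\cup\{x:t(x),n(x)\in\mathbb{R},4n(x)>t(x)^2\}$; every $x\in Q_A$ is $\alpha+\beta J$ ($\alpha,\beta\in\mathbb{R}$, $J\in\mathbb{S}_A$), $x^c=\alpha-\beta J$, $\mathrm{re}(x)=t(x)/2$, $\mathrm{im}(x)=x-\mathrm{re}(x)$, $\mathbb{S}_x=\{\alpha+\beta I:I\in\mathbb{S}_A\}$. Let $D\subseteq\mathbb{C}$ be non-empty, invariant under conjugation, $\Omega=\{\alpha+\beta J:\alpha+i\beta\in D,J\in\mathbb{S}_A\}$. $A_{\mathbb{C}}=\{a+\imath b\}$ with $(a+\imath b)(a'+\imath b')=aa'-bb'+\imath(ab'+ba')$, $\overline{a+\imath b}=a-\imath b$,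 $(a+\imath b)^c=a^c+\imath b^c$. A stem function $F=F_1+\imath F_2:D\to A_{\mathbb{C}}$ satisfies $F(\bar z)=\overline{F(z)}$ and induces the slice function $f=\mathcal{I}(F)$, $f(\alpha+\beta J)=F_1(\alpha+i\beta)+JF_2(\alpha+i\beta)$; $\mathcal{S}(\Omega)$ is the set of these. $f\cdot g=\mathcal{I}(FG)$, $f^c=\mathcal{I}(F^c)$ with $F^c(z)=F(z)^c$, $N(f)=f\cdot f^c$. $V(h)=\{x:h(x)=0\}$. $f^\circ_s(x)=\frac12(f(x)+f(x^c))$, $f'_s(x)=\frac12\mathrm{im}(x)^{-1}(f(x)-f(x^c))$ for $x\notin\mathbb{R}$ (and $f'_s(x):=0$ is not defined for real $x$; for real $x$ only cases (1),(4)-type statements about $\{x\}=\mathbb{S}_x$ are meaningful). *)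

theory Defs
  imports "HOL-Analysis.Analysis"
begin

section \<open>Quaternions, as 4-tuples of reals (a + b i + c j + d k)\<close>

type_synonym quat = "real \<times> real \<times> real \<times> real"

definition qmul :: "quat \<Rightarrow> quat \<Rightarrow> quat" where
  "qmul p q = (case p of (a1, b1, c1, d1) \<Rightarrow> case q of (a2, b2, c2, d2) \<Rightarrow>
     (a1*a2 - b1*b2 - c1*c2 - d1*d2,
      a1*b2 + b1*a2 + c1*d2 - d1*c2,
      a1*c2 - b1*d2 + c1*a2 + d1*b2,
      a1*d2 + b1*c2 - c1*b2 + d1*a2))"

definition qcnj :: "quat \<Rightarrow> quat" where
  "qcnj p = (case p of (a, b, c, d) \<Rightarrow> (a, -b, -c, -d))"

section \<open>Split-octonions SO = H + l H, the pair (p,q) standing for p + l q\<close>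

text \<open>The real vector space structure (and the Euclidean structure identifying SO with R^8)
  is the one of the product type.\<close>

type_synonym so = "quat \<times> quat"

text \<open>Product determined by (lp)(lq) = q p^c, p(lq) = l(p^c q), (lp)q = l(qp):
  (p + l q)(p' + l q') = (p p' + q' q^c) + l (p^c q' + p' q).\<close>

definition so_mult :: "so \<Rightarrow> so \<Rightarrow> so" (infixl "\<odot>" 70) where
  "x \<odot> y = (case x of (p, q) \<Rightarrow> case y of (p', q') \<Rightarrow>
     (qmul p p' + qmul q' (qcnj q), qmul (qcnj p) q' + qmul p' q))"

definition so_one :: so where
  "so_one = ((1, 0, 0, 0), 0)"

definition so_of_real :: "real \<Rightarrow> so" where
  "so_of_real r = r *\<^sub>R so_one"

definition so_cnj :: "so \<Rightarrow> so" where
  "so_cnj x = (case x of (p, q) \<Rightarrow> (qcnj p, - q))"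

definition so_t :: "so \<Rightarrow> so" where
  "so_t x = x + so_cnj x"

definition so_n :: "so \<Rightarrow> so" where
  "so_n x = x \<odot> so_cnj x"

definition so_inverse :: "so \<Rightarrow> so" where
  "so_inverse a = (THE b. a \<odot> b = so_one \<and> b \<odot> a = so_one)"

definition so_re :: "so \<Rightarrow> so" where
  "so_re x = (1/2) *\<^sub>R so_t x"

definition so_im :: "so \<Rightarrow> so" where
  "so_im x = x - so_re x"

definition so_assoc :: "so \<Rightarrow> so \<Rightarrow> so \<Rightarrow> so" where
  "so_assoc a b c = (a \<odot> b) \<odot> c - a \<odot> (b \<odot> c)"

definition so_center :: "so set" where
  "so_center = {r. \<forall>a b. so_assoc r a b = 0 \<and> r \<odot> a = a \<odot> r}"

definition so_central_invertible :: "so \<Rightarrow> bool" where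
  "so_central_invertible r \<longleftrightarrow> r \<in> so_center \<and> (\<exists>s. r \<odot> s = so_one \<and> s \<odot> r = so_one)"

definition so_C :: "so set" where
  "so_C = {0} \<union> {a. so_central_invertible (so_n a) \<and> so_central_invertible (so_n (so_cnj a))}"

definition so_C_star :: "so set" where
  "so_C_star = so_C - {0}"

definition so_zero_divisor :: "so \<Rightarrow> bool" where
  "so_zero_divisor a \<longleftrightarrow> a \<noteq> 0 \<and> so_n a = 0"

definition so_S :: "so set" where
  "so_S = {J. so_t J = 0 \<and> so_n J = so_one}"

definition so_sphere :: "so \<Rightarrow> so set" where
  "so_sphere x = {y. \<exists>\<alpha> \<beta> J I. J \<in> so_S \<and> I \<in> so_S \<and>
      x = so_of_real \<alpha> + \<beta> *\<^sub>R J \<and> y = so_of_real \<alpha> + \<beta> *\<^sub>R I}"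

definition Omega :: "complex set \<Rightarrow> so set" where
  "Omega D = {so_of_real \<alpha> + \<beta> *\<^sub>R J | \<alpha> \<beta> J. Complex \<alpha> \<beta> \<in> D \<and> J \<in> so_S}"

section \<open>The complexification A_C, elements a + i b as pairs (a, b)\<close>

type_synonym soC = "so \<times> so"

definition soC_mult :: "soC \<Rightarrow> soC \<Rightarrow> soC" where
  "soC_mult u v = (case u of (a, b) \<Rightarrow> case v of (a', b') \<Rightarrow>
     (a \<odot> a' - b \<odot> b', a \<odot> b' + b \<odot> a'))"

definition soC_bar :: "soC \<Rightarrow> soC" where
  "soC_bar u = (case u of (a, b) \<Rightarrow> (a, - b))"

definition soC_cnj :: "soC \<Rightarrow> soC" where
  "soC_cnj u = (case u of (a, b) \<Rightarrow> (so_cnj a, so_cnj b))"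

definition is_stem :: "complex set \<Rightarrow> (complex \<Rightarrow> soC) \<Rightarrow> bool" where
  "is_stem D F \<longleftrightarrow> (\<forall>z\<in>D. F (cnj z) = soC_bar (F z))"

definition slice :: "complex set \<Rightarrow> (complex \<Rightarrow> soC) \<Rightarrow> so \<Rightarrow> so" where
  "slice D F x = (THE y. \<exists>\<alpha> \<beta> J. Complex \<alpha> \<beta> \<in> D \<and> J \<in> so_S \<and>
      x = so_of_real \<alpha> + \<beta> *\<^sub>R J \<and>
      y = fst (F (Complex \<alpha> \<beta>)) + J \<odot> snd (F (Complex \<alpha> \<beta>)))"

text \<open>f^c = I(F^c) and N(f) = f . f^c = I(F F^c).\<close>
definition slice_cnj :: "complex set \<Rightarrow> (complex \<Rightarrow> soC) \<Rightarrow> so \<Rightarrow> so" where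
  "slice_cnj D F = slice D (\<lambda>z. soC_cnj (F z))"

definition slice_N :: "complex set \<Rightarrow> (complex \<Rightarrow> soC) \<Rightarrow> so \<Rightarrow> so" where
  "slice_N D F = slice D (\<lambda>z. soC_mult (F z) (soC_cnj (F z)))"

definition zeros :: "(so \<Rightarrow> so) \<Rightarrow> so set" where
  "zeros h = {y. h y = 0}"

definition sph_value :: "(so \<Rightarrow> so) \<Rightarrow> so \<Rightarrow> so" where
  "sph_value f x = (1/2) *\<^sub>R (f x + f (so_cnj x))"

definition sph_deriv :: "(so \<Rightarrow> so) \<Rightarrow> so \<Rightarrow> so" where
  "sph_deriv f x = (if so_im x = 0 then 0
     else (1/2) *\<^sub>R (so_inverse (so_im x) \<odot> (f x - f (so_cnj x))))"

definition affine_2plane :: "so set \<Rightarrow> bool" where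
  "affine_2plane S \<longleftrightarrow> affine S \<and> aff_dim S = 2"

end

theory Submission
  imports Defs
begin

text \<open>On the sphere \<open>S\<^sub>x = {\<alpha> + \<beta>I}\<close> a slice function takes the values \<open>f(\<alpha> + \<beta>I) = a + I b\<close>
  with \<open>a = F\<^sub>1(\<alpha> + i\<beta>)\<close>, \<open>b = F\<^sub>2(\<alpha> + i\<beta>)\<close>, and \<open>f\<degree>\<^sub>s(x) = a\<close>, \<open>f'\<^sub>s(x) = b/\<beta>\<close>.
  So everything reduces to the imaginary units \<open>I\<close> solving \<open>a + I b = 0\<close>.
  A solution forces \<open>n(a) = n(b)\<close> and \<open>\<langle>a, b\<rangle> = 0\<close>. If \<open>n(b) \<noteq> 0\<close> it is unique,
  \<open>I = - n(b)\<inverse> a b\<^sup>c\<close>. If \<open>b\<close> is a zero divisor, the solutions are \<open>I\<^sub>0 + K\<close> with \<open>K\<close> in the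
  left annihilator of \<open>b\<close>, imaginary and orthogonal to \<open>I\<^sub>0\<close>: the annihilator is a maximal, i.e.
  4-dimensional, isotropic subspace of the split form, and the two linear conditions cut it
  down to a plane. Finally \<open>f\<^sup>c\<close> corresponds to the pair \<open>(a\<^sup>c, b\<^sup>c)\<close> and \<open>N(f)\<close> to the real pair
  \<open>(n(a) - n(b), 2\<langle>a, b\<rangle>)\<close>, so \<open>N(f)\<close> vanishes either on all of \<open>S\<^sub>x\<close> or nowhere on it.\<close>

section \<open>Split-octonion arithmetic in coordinates\<close>

definition so_qnorm :: "so \<Rightarrow> real" where
  "so_qnorm x = (case x of ((a, b, c, d), (e, f, g, h)) \<Rightarrow>
     a*a + b*b + c*c + d*d - e*e - f*f - g*g - h*h)"

definition so_polar :: "so \<Rightarrow> so \<Rightarrow> real" where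
  "so_polar x y = (case x of ((a, b, c, d), (e, f, g, h)) \<Rightarrow>
     case y of ((a', b', c', d'), (e', f', g', h')) \<Rightarrow>
     a*a' + b*b' + c*c' + d*d' - e*e' - f*f' - g*g' - h*h')"

definition so_real_part :: "so \<Rightarrow> real" where
  "so_real_part x = fst (fst x)"

lemmas so_coord_defs = so_mult_def qmul_def qcnj_def so_cnj_def so_qnorm_def so_polar_def
  so_real_part_def so_of_real_def so_one_def zero_prod_def

lemma so_of_real_coord: "so_of_real r = ((r, 0, 0, 0), (0, 0, 0, 0))"
  by (simp add: so_coord_defs)

lemma so_of_real_inj [simp]: "so_of_real r = so_of_real s \<longleftrightarrow> r = s"
  by (simp add: so_of_real_coord)

lemma so_of_real_eq_0_iff [simp]: "so_of_real r = 0 \<longleftrightarrow> r = 0"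
  by (simp add: so_of_real_coord zero_prod_def)

lemma so_of_real_zero [simp]: "so_of_real 0 = 0"
  by simp

lemma so_one_eq: "so_one = so_of_real 1"
  by (simp add: so_coord_defs)

lemma so_of_real_mult: "so_of_real (r * s) = r *\<^sub>R so_of_real s"
  by (simp add: so_of_real_def)

lemma so_of_real_diff: "so_of_real (r - s) = so_of_real r - so_of_real s"
  by (simp add: so_of_real_def scaleR_diff_left)

lemma so_mult_of_real_left [simp]: "so_of_real r \<odot> x = r *\<^sub>R x"
  by (cases x) (auto simp: so_coord_defs split: prod.splits; (simp add: algebra_simps)?)

lemma so_mult_of_real_right [simp]: "x \<odot> so_of_real r = r *\<^sub>R x"
  by (cases x) (auto simp: so_coord_defs split: prod.splits; (simp add: algebra_simps)?)

lemma so_mult_add_left: "(x + y) \<odot> z = x \<odot> z + y \<odot> z"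
  by (cases x, cases y, cases z) (auto simp: so_coord_defs split: prod.splits; (simp add: algebra_simps)?)

lemma so_mult_add_right: "z \<odot> (x + y) = z \<odot> x + z \<odot> y"
  by (cases x, cases y, cases z) (auto simp: so_coord_defs split: prod.splits; (simp add: algebra_simps)?)

lemma so_mult_scaleR_left [simp]: "(r *\<^sub>R x) \<odot> z = r *\<^sub>R (x \<odot> z)"
  by (cases x, cases z) (auto simp: so_coord_defs split: prod.splits; (simp add: algebra_simps)?)

lemma so_mult_scaleR_right [simp]: "z \<odot> (r *\<^sub>R x) = r *\<^sub>R (z \<odot> x)"
  by (cases x, cases z) (auto simp: so_coord_defs split: prod.splits; (simp add: algebra_simps)?)

lemma so_mult_zero_left [simp]: "0 \<odot> x = 0"
  using so_mult_scaleR_left[of 0 0 x] by simp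

lemma so_mult_zero_right [simp]: "x \<odot> 0 = 0"
  using so_mult_scaleR_right[of x 0 0] by simp

lemma so_mult_minus_left [simp]: "(- x) \<odot> z = - (x \<odot> z)"
  using so_mult_scaleR_left[of "-1" x z] by simp

lemma so_mult_minus_right [simp]: "z \<odot> (- x) = - (z \<odot> x)"
  using so_mult_scaleR_right[of z "-1" x] by simp

lemma so_mult_diff_left: "(x - y) \<odot> z = x \<odot> z - y \<odot> z"
  using so_mult_add_left[of x "- y" z] by simp

lemma so_mult_diff_right: "z \<odot> (x - y) = z \<odot> x - z \<odot> y"
  using so_mult_add_right[of z x "- y"] by simp

lemma so_cnj_add [simp]: "so_cnj (x + y) = so_cnj x + so_cnj y"
  by (cases x, cases y) (auto simp: so_coord_defs split: prod.splits; (simp add: algebra_simps)?)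

lemma so_cnj_scaleR [simp]: "so_cnj (r *\<^sub>R x) = r *\<^sub>R so_cnj x"
  by (cases x) (auto simp: so_coord_defs split: prod.splits; (simp add: algebra_simps)?)

lemma so_cnj_minus [simp]: "so_cnj (- x) = - so_cnj x"
  by (cases x) (auto simp: so_coord_defs split: prod.splits; (simp add: algebra_simps)?)

lemma so_cnj_cnj [simp]: "so_cnj (so_cnj x) = x"
  by (cases x) (auto simp: so_coord_defs split: prod.splits; (simp add: algebra_simps)?)

lemma so_cnj_zero [simp]: "so_cnj 0 = 0"
  by (simp add: so_coord_defs)

lemma so_cnj_eq_0_iff [simp]: "so_cnj x = 0 \<longleftrightarrow> x = 0"
  by (cases x) (auto simp: so_coord_defs split: prod.splits; (simp add: algebra_simps)?)

lemma so_cnj_of_real [simp]: "so_cnj (so_of_real r) = so_of_real r"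
  by (simp add: so_coord_defs)

lemma so_real_part_add [simp]: "so_real_part (x + y) = so_real_part x + so_real_part y"
  and so_real_part_scaleR [simp]: "so_real_part (r *\<^sub>R x) = r * so_real_part x"
  and so_real_part_minus [simp]: "so_real_part (- x) = - so_real_part x"
  and so_real_part_diff [simp]: "so_real_part (x - y) = so_real_part x - so_real_part y"
  and so_real_part_of_real [simp]: "so_real_part (so_of_real r) = r"
  and so_real_part_zero [simp]: "so_real_part 0 = 0"
  by (simp_all add: so_coord_defs)

lemma so_cnj_eq: "so_cnj x = so_of_real (2 * so_real_part x) - x"
  by (cases x) (auto simp: so_coord_defs split: prod.splits; (simp add: algebra_simps)?)

lemma so_t_eq: "so_t x = so_of_real (2 * so_real_part x)"
  by (cases x) (auto simp: so_t_def so_coord_defs split: prod.splits)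

lemma so_mult_cnj_self: "x \<odot> so_cnj x = so_of_real (so_qnorm x)"
  by (cases x) (auto simp: so_coord_defs split: prod.splits; (simp add: algebra_simps)?)

lemma so_n_eq: "so_n x = so_of_real (so_qnorm x)"
  unfolding so_n_def by (rule so_mult_cnj_self)

lemma so_qnorm_cnj [simp]: "so_qnorm (so_cnj x) = so_qnorm x"
  by (cases x) (auto simp: so_coord_defs split: prod.splits; (simp add: algebra_simps)?)

lemma so_cnj_mult_self: "so_cnj x \<odot> x = so_of_real (so_qnorm x)"
  using so_mult_cnj_self[of "so_cnj x"] by simp

lemma so_qnorm_mult: "so_qnorm (x \<odot> y) = so_qnorm x * so_qnorm y"
  by (cases x, cases y) (auto simp: so_coord_defs split: prod.splits; (simp add: algebra_simps)?)

lemma so_qnorm_scaleR [simp]: "so_qnorm (r *\<^sub>R x) = r * r * so_qnorm x"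
  by (cases x) (auto simp: so_coord_defs split: prod.splits; (simp add: algebra_simps)?)

lemma so_qnorm_add: "so_qnorm (x + y) = so_qnorm x + so_qnorm y + 2 * so_polar x y"
  by (cases x, cases y) (auto simp: so_coord_defs split: prod.splits; (simp add: algebra_simps)?)

lemma so_qnorm_minus [simp]: "so_qnorm (- x) = so_qnorm x"
  by (cases x) (auto simp: so_coord_defs split: prod.splits; (simp add: algebra_simps)?)

lemma so_qnorm_zero [simp]: "so_qnorm 0 = 0"
  by (simp add: so_coord_defs)

lemma so_qnorm_of_real [simp]: "so_qnorm (so_of_real r) = r * r"
  by (simp add: so_coord_defs)

text \<open>These consequences of alternativity are what replaces associativity throughout.\<close>

lemma so_cnj_mult_mult_left: "so_cnj x \<odot> (x \<odot> y) = so_qnorm x *\<^sub>R y"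
  by (cases x, cases y) (auto simp: so_coord_defs split: prod.splits; (simp add: algebra_simps)?)

lemma so_mult_mult_cnj_right: "(y \<odot> x) \<odot> so_cnj x = so_qnorm x *\<^sub>R y"
  by (cases x, cases y) (auto simp: so_coord_defs split: prod.splits; (simp add: algebra_simps)?)

lemma so_mult_cnj_mult_right: "(y \<odot> so_cnj x) \<odot> x = so_qnorm x *\<^sub>R y"
  using so_mult_mult_cnj_right[of y "so_cnj x"] by simp

lemma so_real_part_mult_cnj: "so_real_part (x \<odot> so_cnj y) = so_polar x y"
  by (cases x, cases y) (auto simp: so_coord_defs split: prod.splits; (simp add: algebra_simps)?)

lemma so_polar_mult_cnj_right: "so_polar w (y \<odot> so_cnj b) = so_polar (w \<odot> b) y"
  by (cases w, cases y, cases b) (auto simp: so_coord_defs split: prod.splits; (simp add: algebra_simps)?)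

lemma so_polar_commute: "so_polar x y = so_polar y x"
  by (cases x, cases y) (auto simp: so_coord_defs split: prod.splits; (simp add: algebra_simps)?)

lemma so_polar_cnj [simp]: "so_polar (so_cnj x) (so_cnj y) = so_polar x y"
  by (cases x, cases y) (auto simp: so_coord_defs split: prod.splits; (simp add: algebra_simps)?)

lemma so_mult_cnj_add_commute: "x \<odot> so_cnj y + y \<odot> so_cnj x = so_of_real (2 * so_polar x y)"
  by (cases x, cases y) (auto simp: so_coord_defs split: prod.splits; (simp add: algebra_simps)?)

lemma so_polar_add_right: "so_polar z (x + y) = so_polar z x + so_polar z y"
  and so_polar_scaleR_right: "so_polar z (r *\<^sub>R x) = r * so_polar z x"
  by (cases x, cases y, cases z; auto simp: so_coord_defs split: prod.splits; (simp add: algebra_simps)?)+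

lemma so_polar_zero_right [simp]: "so_polar x 0 = 0"
  using so_polar_scaleR_right[of x 0 0] by simp

lemma so_polar_minus_right [simp]: "so_polar x (- y) = - so_polar x y"
  using so_polar_scaleR_right[of x "-1" y] by simp

lemma so_polar_diff_left: "so_polar (x - y) z = so_polar x z - so_polar y z"
  by (cases x, cases y, cases z) (auto simp: so_coord_defs split: prod.splits; (simp add: algebra_simps)?)

lemma so_polar_diff_right: "so_polar z (x - y) = so_polar z x - so_polar z y"
  by (cases x, cases y, cases z) (auto simp: so_coord_defs split: prod.splits; (simp add: algebra_simps)?)

lemma so_polar_of_real_left: "so_polar (so_of_real r) x = r * so_real_part x"
  by (cases x) (auto simp: so_coord_defs split: prod.splits; (simp add: algebra_simps)?)

lemma so_polar_nondegenerate:
  assumes "x \<noteq> 0"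
  obtains y where "so_polar x y \<noteq> 0"
proof -
  have "so_polar x (case x of (p, q) \<Rightarrow> (p, - q)) \<noteq> 0"
    using assms
    by (cases x) (auto simp: so_coord_defs add_nonneg_eq_0_iff split: prod.splits)
  then show thesis by (rule that)
qed

lemma so_polar_eq_0_imp_eq_0: "(\<And>y. so_polar x y = 0) \<Longrightarrow> x = 0"
  using so_polar_nondegenerate by metis

lemma so_qnorm_eq_0_fst_eq_0: "so_qnorm x = 0 \<Longrightarrow> fst x = 0 \<Longrightarrow> x = 0"
  by (cases x) (auto simp: so_coord_defs split: prod.splits;
      smt (verit) mult_eq_0_iff zero_le_square)

lemma so_inverse_eq:
  assumes "so_qnorm a \<noteq> 0"
  shows "so_inverse a = (1 / so_qnorm a) *\<^sub>R so_cnj a"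
  unfolding so_inverse_def
proof (rule the_equality)
  show "a \<odot> ((1 / so_qnorm a) *\<^sub>R so_cnj a) = so_one \<and> (1 / so_qnorm a) *\<^sub>R so_cnj a \<odot> a = so_one"
    using assms
    by (simp add: so_mult_cnj_self so_cnj_mult_self so_one_eq so_of_real_mult[symmetric])
next
  fix c assume "a \<odot> c = so_one \<and> c \<odot> a = so_one"
  then have "so_qnorm a *\<^sub>R c = so_cnj a"
    using so_cnj_mult_mult_left[of a c] by (simp add: so_one_eq)
  then have "(1 / so_qnorm a) *\<^sub>R (so_qnorm a *\<^sub>R c) = (1 / so_qnorm a) *\<^sub>R so_cnj a"
    by simp
  then show "c = (1 / so_qnorm a) *\<^sub>R so_cnj a"
    using assms by simp
qed

lemma so_central_invertible_of_real_iff: "so_central_invertible (so_of_real r) \<longleftrightarrow> r \<noteq> 0"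
proof
  assume "so_central_invertible (so_of_real r)"
  then obtain s where "r *\<^sub>R s = so_of_real 1"
    unfolding so_central_invertible_def by (auto simp: so_one_eq)
  then show "r \<noteq> 0"
    by (metis scaleR_zero_left so_of_real_eq_0_iff zero_neq_one)
next
  assume r: "r \<noteq> 0"
  have "\<forall>x y. so_assoc (so_of_real r) x y = 0 \<and> so_of_real r \<odot> x = x \<odot> so_of_real r"
    unfolding so_assoc_def by (intro allI) simp
  then have "so_of_real r \<in> so_center"
    unfolding so_center_def by blast
  moreover have "so_of_real r \<odot> so_of_real (1 / r) = so_one \<and> so_of_real (1 / r) \<odot> so_of_real r = so_one"
    using r by (simp add: so_one_eq so_of_real_mult[symmetric])
  ultimately show "so_central_invertible (so_of_real r)"
    unfolding so_central_invertible_def by blast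
qed

lemma so_C_star_iff: "x \<in> so_C_star \<longleftrightarrow> so_qnorm x \<noteq> 0"
  by (auto simp: so_C_star_def so_C_def so_n_eq so_central_invertible_of_real_iff)

lemma so_zero_divisor_iff: "so_zero_divisor x \<longleftrightarrow> x \<noteq> 0 \<and> so_qnorm x = 0"
  by (simp add: so_zero_divisor_def so_n_eq)

text \<open>From here on elements of the product type \<open>so\<close> are not to be split into coordinates.\<close>

declare split_paired_All [simp del] split_paired_Ex [simp del]

lemma so_S_iff: "J \<in> so_S \<longleftrightarrow> so_real_part J = 0 \<and> so_qnorm J = 1"
  by (simp add: so_S_def so_t_eq so_n_eq so_one_eq)

lemma so_S_uminus: "J \<in> so_S \<Longrightarrow> - J \<in> so_S"
  by (simp add: so_S_iff)

lemma so_S_cnj: "J \<in> so_S \<Longrightarrow> so_cnj J = - J"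
  by (simp add: so_S_iff so_cnj_eq)

lemma so_S_mult_mult: "J \<in> so_S \<Longrightarrow> J \<odot> (J \<odot> y) = - y"
  using so_cnj_mult_mult_left[of J y] by (simp add: so_S_cnj so_S_iff minus_equation_iff)

lemma so_S_nonzero: "J \<in> so_S \<Longrightarrow> J \<noteq> 0"
  by (auto simp: so_S_iff)

lemma so_S_nonempty: "so_S \<noteq> {}"
proof -
  have "((0, 1, 0, 0), 0) \<in> so_S"
    by (simp add: so_S_iff so_coord_defs)
  then show ?thesis by blast
qed

section \<open>Slice functions on a sphere\<close>

definition sphere_point :: "real \<Rightarrow> real \<Rightarrow> so \<Rightarrow> so" where
  "sphere_point \<alpha> \<beta> I = so_of_real \<alpha> + \<beta> *\<^sub>R I"

lemma sphere_point_eq_cases: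
  assumes J: "J \<in> so_S" and I: "I \<in> so_S" and e: "sphere_point \<alpha> \<beta> J = sphere_point \<alpha>' \<beta>' I"
  shows "\<alpha>' = \<alpha> \<and> (\<beta>' = \<beta> \<and> (\<beta> = 0 \<or> I = J) \<or> \<beta>' = - \<beta> \<and> I = - J)"
proof -
  have "\<alpha>' = \<alpha>"
    using arg_cong[OF e, of so_real_part] J I by (simp add: so_S_iff sphere_point_def)
  then have scaled: "\<beta> *\<^sub>R J = \<beta>' *\<^sub>R I"
    using e by (simp add: sphere_point_def)
  have "\<beta> * \<beta> = \<beta>' * \<beta>'"
    using arg_cong[OF scaled, of so_qnorm] J I by (simp add: so_S_iff)
  then consider "\<beta>' = \<beta>" | "\<beta>' = - \<beta>" "\<beta> \<noteq> 0"
    by (metis minus_zero square_eq_iff)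
  then show ?thesis
  proof cases
    case 1
    then show ?thesis
      using scaled \<open>\<alpha>' = \<alpha>\<close> by auto
  next
    case 2
    then have "\<beta> *\<^sub>R J = \<beta> *\<^sub>R (- I)"
      using scaled by simp
    then have "J = - I"
      using \<open>\<beta> \<noteq> 0\<close> by (rule scaleR_left_imp_eq[rotated])
    then show ?thesis
      using 2 \<open>\<alpha>' = \<alpha>\<close> by simp
  qed
qed

lemma so_sphere_sphere_point:
  assumes "J \<in> so_S"
  shows "so_sphere (sphere_point \<alpha> \<beta> J) = sphere_point \<alpha> \<beta> ` so_S"
proof
  show "so_sphere (sphere_point \<alpha> \<beta> J) \<subseteq> sphere_point \<alpha> \<beta> ` so_S"
  proof
    fix y assume "y \<in> so_sphere (sphere_point \<alpha> \<beta> J)"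
    then obtain \<alpha>' \<beta>' J' I where "J' \<in> so_S" "I \<in> so_S"
      and "sphere_point \<alpha> \<beta> J = sphere_point \<alpha>' \<beta>' J'" and y: "y = sphere_point \<alpha>' \<beta>' I"
      unfolding so_sphere_def sphere_point_def by blast
    then have "\<alpha>' = \<alpha> \<and> (\<beta>' = \<beta> \<or> \<beta>' = - \<beta>)"
      using sphere_point_eq_cases[OF assms] by blast
    then have "y = sphere_point \<alpha> \<beta> I \<or> y = sphere_point \<alpha> \<beta> (- I)"
      using y by (auto simp: sphere_point_def)
    then show "y \<in> sphere_point \<alpha> \<beta> ` so_S"
      using \<open>I \<in> so_S\<close> so_S_uminus by blast
  qed
next
  show "sphere_point \<alpha> \<beta> ` so_S \<subseteq> so_sphere (sphere_point \<alpha> \<beta> J)"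
    unfolding so_sphere_def sphere_point_def using assms by blast
qed

lemma soC_bar_eq: "soC_bar u = (fst u, - snd u)"
  by (cases u) (simp add: soC_bar_def)

lemma soC_cnj_eq: "soC_cnj u = (so_cnj (fst u), so_cnj (snd u))"
  by (cases u) (simp add: soC_cnj_def)

lemma soC_mult_eq: "soC_mult u v = (fst u \<odot> fst v - snd u \<odot> snd v, fst u \<odot> snd v + snd u \<odot> fst v)"
  by (cases u, cases v) (simp add: soC_mult_def)

lemma is_stem_snd_real:
  assumes "is_stem D G" "Complex \<alpha> 0 \<in> D"
  shows "snd (G (Complex \<alpha> 0)) = 0"
proof -
  have "G (Complex \<alpha> 0) = soC_bar (G (Complex \<alpha> 0))"
    using assms complex_cnj[of \<alpha> 0] unfolding is_stem_def by force
  then have "snd (G (Complex \<alpha> 0)) = - snd (G (Complex \<alpha> 0))"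
    by (metis soC_bar_eq snd_conv)
  then show ?thesis
    by (simp add: eq_neg_iff_add_eq_0 flip: scaleR_2)
qed

lemma is_stem_cnj_arg:
  assumes "is_stem D G" "Complex \<alpha> \<beta> \<in> D"
  shows "G (Complex \<alpha> (- \<beta>)) = (fst (G (Complex \<alpha> \<beta>)), - snd (G (Complex \<alpha> \<beta>)))"
  using assms complex_cnj[of \<alpha> \<beta>] unfolding is_stem_def by (force simp: soC_bar_eq)

lemma is_stem_soC_cnj: "is_stem D G \<Longrightarrow> is_stem D (\<lambda>z. soC_cnj (G z))"
  unfolding is_stem_def by (simp add: soC_cnj_eq soC_bar_eq)

lemma is_stem_soC_mult_cnj: "is_stem D G \<Longrightarrow> is_stem D (\<lambda>z. soC_mult (G z) (soC_cnj (G z)))"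
  unfolding is_stem_def by (simp add: soC_cnj_eq soC_bar_eq soC_mult_eq)

lemma slice_sphere_point:
  assumes stem: "is_stem D G" and z: "Complex \<alpha> \<beta> \<in> D" and J: "J \<in> so_S"
  shows "slice D G (sphere_point \<alpha> \<beta> J) = fst (G (Complex \<alpha> \<beta>)) + J \<odot> snd (G (Complex \<alpha> \<beta>))"
  unfolding slice_def
proof (rule the_equality)
  fix y assume "\<exists>\<alpha>' \<beta>' J'. Complex \<alpha>' \<beta>' \<in> D \<and> J' \<in> so_S \<and>
       sphere_point \<alpha> \<beta> J = so_of_real \<alpha>' + \<beta>' *\<^sub>R J' \<and>
       y = fst (G (Complex \<alpha>' \<beta>')) + J' \<odot> snd (G (Complex \<alpha>' \<beta>'))"
  then obtain \<alpha>' \<beta>' J' where "J' \<in> so_S"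
    and e: "sphere_point \<alpha> \<beta> J = sphere_point \<alpha>' \<beta>' J'"
    and y: "y = fst (G (Complex \<alpha>' \<beta>')) + J' \<odot> snd (G (Complex \<alpha>' \<beta>'))"
    unfolding sphere_point_def by blast
  then consider "\<alpha>' = \<alpha>" "\<beta>' = \<beta>" "\<beta> = 0" | "\<alpha>' = \<alpha>" "\<beta>' = \<beta>" "J' = J" | "\<alpha>' = \<alpha>" "\<beta>' = - \<beta>" "J' = - J"
    using sphere_point_eq_cases[OF J] by blast
  then show "y = fst (G (Complex \<alpha> \<beta>)) + J \<odot> snd (G (Complex \<alpha> \<beta>))"
  proof cases
    case 1
    then show ?thesis
      using y z is_stem_snd_real[OF stem] by simp
  next
    case 2
    then show ?thesis
      using y by simp
  next
    case 3
    then show ?thesis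
      using y is_stem_cnj_arg[OF stem z] by simp
  qed
qed (use z J in \<open>unfold sphere_point_def, blast\<close>)

section \<open>Imaginary units solving \<open>a + I b = 0\<close>\<close>

definition unit_roots :: "so \<Rightarrow> so \<Rightarrow> so set" where
  "unit_roots a b = {I \<in> so_S. a + I \<odot> b = 0}"

definition balanced :: "so \<Rightarrow> so \<Rightarrow> bool" where
  "balanced a b \<longleftrightarrow> so_qnorm a = so_qnorm b \<and> so_polar a b = 0"

lemma zeros_slice_sphere:
  assumes "is_stem D G" "Complex \<alpha> \<beta> \<in> D" "J \<in> so_S"
  shows "zeros (slice D G) \<inter> so_sphere (sphere_point \<alpha> \<beta> J) =
    sphere_point \<alpha> \<beta> ` unit_roots (fst (G (Complex \<alpha> \<beta>))) (snd (G (Complex \<alpha> \<beta>)))"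
  using slice_sphere_point[OF assms(1,2)]
  by (auto simp: so_sphere_sphere_point[OF assms(3)] zeros_def unit_roots_def)

lemma balanced_cnj [simp]: "balanced (so_cnj a) (so_cnj b) \<longleftrightarrow> balanced a b"
  by (simp add: balanced_def)

lemma unit_roots_zero_right: "unit_roots a 0 = (if a = 0 then so_S else {})"
  by (auto simp: unit_roots_def)

lemma unit_roots_of_real:
  "unit_roots (so_of_real r) (so_of_real s) = (if r = 0 \<and> s = 0 then so_S else {})"
proof -
  have "so_of_real r + s *\<^sub>R I = 0 \<longleftrightarrow> r = 0 \<and> s = 0" if "I \<in> so_S" for I
  proof
    assume root: "so_of_real r + s *\<^sub>R I = 0"
    have "r = 0"
      using arg_cong[OF root, of so_real_part] that by (simp add: so_S_iff)
    with root so_S_nonzero[OF that] show "r = 0 \<and> s = 0" by simp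
  qed simp
  then show ?thesis by (auto simp: unit_roots_def)
qed

lemma unit_roots_imp_balanced:
  assumes "I \<in> unit_roots a b"
  shows "balanced a b"
proof -
  have I: "I \<in> so_S" and a: "a = - (I \<odot> b)"
    using assms by (auto simp: unit_roots_def eq_neg_iff_add_eq_0 add.commute)
  have "so_polar a b = so_real_part (a \<odot> so_cnj b)"
    by (simp add: so_real_part_mult_cnj)
  also have "\<dots> = 0"
    using I by (simp add: a so_mult_mult_cnj_right so_S_iff)
  finally have "so_polar a b = 0" .
  moreover have "so_qnorm a = so_qnorm b"
    using I by (simp add: a so_qnorm_mult so_S_iff)
  ultimately show ?thesis
    by (simp add: balanced_def)
qed

lemma unit_roots_invertible:
  assumes b: "so_qnorm b \<noteq> 0"
  shows "unit_roots a b = (if balanced a b then {- (1 / so_qnorm b) *\<^sub>R (a \<odot> so_cnj b)} else {})"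
proof -
  define I0 where "I0 = - (1 / so_qnorm b) *\<^sub>R (a \<odot> so_cnj b)"
  have unique: "I = I0" if "I \<in> unit_roots a b" for I
  proof -
    have "I \<odot> b = - a"
      using that by (simp add: unit_roots_def eq_neg_iff_add_eq_0 add.commute)
    then have "so_qnorm b *\<^sub>R I = - (a \<odot> so_cnj b)"
      using so_mult_mult_cnj_right[of I b] by simp
    then have "(1 / so_qnorm b) *\<^sub>R (so_qnorm b *\<^sub>R I) = (1 / so_qnorm b) *\<^sub>R - (a \<odot> so_cnj b)"
      by simp
    then show ?thesis
      using b unfolding I0_def by simp
  qed
  have root: "I0 \<in> unit_roots a b" if "balanced a b"
  proof -
    have "I0 \<odot> b = - a"
      using b by (simp add: I0_def so_mult_cnj_mult_right)
    moreover have "so_real_part I0 = 0"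
      using that by (simp add: I0_def so_real_part_mult_cnj balanced_def)
    moreover have "so_qnorm I0 = 1"
      using that b by (simp add: I0_def so_qnorm_mult balanced_def)
    ultimately show ?thesis
      by (simp add: unit_roots_def so_S_iff)
  qed
  show ?thesis
  proof (cases "balanced a b")
    case True
    then have "unit_roots a b = {I0}"
      using unique root by blast
    with True show ?thesis
      by (simp add: I0_def)
  qed (auto dest: unit_roots_imp_balanced)
qed

subsection \<open>The case of a zero divisor\<close>

lemma dim_Int_kernel_add_one:
  fixes U :: "'a::euclidean_space set" and \<phi> :: "'a \<Rightarrow> real"
  assumes U: "subspace U" and \<phi>: "linear \<phi>" and u0: "u0 \<in> U" "\<phi> u0 \<noteq> 0"
  shows "dim (U \<inter> {x. \<phi> x = 0}) + 1 = dim U"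
proof -
  let ?K = "U \<inter> {x. \<phi> x = 0}"
  have sub: "subspace ?K"
    using U \<phi> by (simp add: subspace_inter linear_subspace_kernel)
  have "U \<subseteq> span (insert u0 ?K)"
  proof
    fix u assume u: "u \<in> U"
    define c where "c = \<phi> u / \<phi> u0"
    have "u - c *\<^sub>R u0 \<in> ?K"
      using u u0 U \<phi> by (simp add: c_def subspace_diff subspace_scale linear_diff linear_scale)
    then have "(u - c *\<^sub>R u0) + c *\<^sub>R u0 \<in> span (insert u0 ?K)"
      by (meson insertI1 span_add span_base span_scale subset_insertI span_superset subsetD)
    then show "u \<in> span (insert u0 ?K)" by simp
  qed
  moreover have "span (insert u0 ?K) \<subseteq> U"
    using U u0 by (simp add: span_minimal)
  ultimately have "dim U = dim (insert u0 ?K)"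
    by (metis dim_span subset_antisym)
  moreover have "u0 \<notin> span ?K"
    using sub u0 by (simp add: span_eq_iff[THEN iffD2])
  ultimately show ?thesis
    by (simp add: dim_insert)
qed

lemma isotropic_subspace_dim_le:
  assumes U: "subspace U" and iso: "\<And>K. K \<in> U \<Longrightarrow> so_qnorm K = 0"
  shows "dim U \<le> 4"
proof -
  have "inj_on fst (span U)"
  proof (rule inj_onI)
    fix x y assume "x \<in> span U" "y \<in> span U" "fst x = (fst y :: quat)"
    then have "so_qnorm (x - y) = 0" "fst (x - y) = 0"
      using U iso by (simp_all add: span_eq_iff[THEN iffD2] subspace_diff)
    then show "x = y"
      using so_qnorm_eq_0_fst_eq_0 by fastforce
  qed
  then have "dim (fst ` U) = dim U"
    by (rule dim_image_eq[OF linear_fst])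
  moreover have "dim (fst ` U :: quat set) \<le> 4"
    using dim_subset_UNIV[of "fst ` U :: quat set"] by simp
  ultimately show ?thesis by simp
qed

lemma left_annihilator_isotropic: "b \<noteq> 0 \<Longrightarrow> K \<odot> b = 0 \<Longrightarrow> so_qnorm K = 0"
  using so_cnj_mult_mult_left[of K b] by auto

lemma subspace_left_annihilator: "subspace {K. K \<odot> b = 0}"
  by (rule linear_subspace_kernel) (rule linearI, simp_all add: so_mult_add_left)

text \<open>Right multiplication by \<open>b\<^sup>c\<close> maps the orthogonal complement of its kernel injectively into
  the annihilator of \<open>b\<close>; both kernels are isotropic, hence of dimension at most 4 in \<open>\<real>\<^sup>8\<close>.\<close>

lemma dim_left_annihilator:
  assumes b: "b \<noteq> 0" "so_qnorm b = 0"
  shows "dim {K. K \<odot> b = 0} = 4"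
proof -
  define ker where "ker = {y. y \<odot> so_cnj b = 0}"
  define C where "C = {y. \<forall>x\<in>ker. orthogonal x y}"
  have "dim ker \<le> 4"
    unfolding ker_def using b
    by (intro isotropic_subspace_dim_le subspace_left_annihilator left_annihilator_isotropic) auto
  moreover have "dim C + dim ker = dim (UNIV :: so set)"
    unfolding C_def using dim_subspace_orthogonal_to_vectors[of ker UNIV]
    by (simp add: subspace_left_annihilator ker_def)
  moreover have "subspace C"
    unfolding subspace_def C_def orthogonal_def by (auto simp: inner_add_right)
  have "inj_on (\<lambda>y. y \<odot> so_cnj b) (span C)"
  proof (rule inj_onI)
    fix x y assume xy: "x \<in> span C" "y \<in> span C" "x \<odot> so_cnj b = y \<odot> so_cnj b"
    then have "x - y \<in> C" "x - y \<in> ker"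
      using \<open>subspace C\<close> by (simp_all add: span_eq_iff[THEN iffD2] subspace_diff ker_def so_mult_diff_left)
    then have "orthogonal (x - y) (x - y)"
      unfolding C_def by blast
    then show "x = y" by (simp add: orthogonal_def)
  qed
  then have "dim ((\<lambda>y. y \<odot> so_cnj b) ` C) = dim C"
    by (rule dim_image_eq[rotated]) (rule linearI, simp_all add: so_mult_add_left)
  moreover have "(\<lambda>y. y \<odot> so_cnj b) ` C \<subseteq> {K. K \<odot> b = 0}"
    using b by (intro image_subsetI) (simp add: so_mult_cnj_mult_right)
  then have "dim ((\<lambda>y. y \<odot> so_cnj b) ` C) \<le> dim {K. K \<odot> b = 0}"
    by (rule dim_subset)
  moreover have "dim {K. K \<odot> b = 0} \<le> 4"
    using b by (intro isotropic_subspace_dim_le subspace_left_annihilator left_annihilator_isotropic) auto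
  ultimately show ?thesis by simp
qed

lemma left_annihilator_real_part_nonzero:
  assumes b: "b \<noteq> 0" "so_qnorm b = 0"
  shows "\<exists>u. u \<odot> b = 0 \<and> so_real_part u \<noteq> 0"
proof -
  obtain y where "so_polar b y \<noteq> 0"
    using so_polar_nondegenerate[OF b(1)] by blast
  then have "(y \<odot> so_cnj b) \<odot> b = 0 \<and> so_real_part (y \<odot> so_cnj b) \<noteq> 0"
    using b by (simp add: so_mult_cnj_mult_right so_real_part_mult_cnj so_polar_commute)
  then show ?thesis ..
qed

text \<open>If \<open>\<langle>I\<^sub>0, -\<rangle>\<close> were a multiple \<open>k\<close> of the real part on the annihilator of \<open>b\<close>, then
  \<open>(I\<^sub>0 - k) b\<close> would be orthogonal to everything, although \<open>n(I\<^sub>0 - k) = 1 + k\<^sup>2 \<noteq> 0\<close>.\<close>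

lemma left_annihilator_imaginary_polar_nonzero:
  assumes b: "b \<noteq> 0" "so_qnorm b = 0" and I0: "I0 \<in> so_S"
  shows "\<exists>u. u \<odot> b = 0 \<and> so_real_part u = 0 \<and> so_polar I0 u \<noteq> 0"
proof (rule ccontr)
  assume "\<not> ?thesis"
  then have H: "so_polar I0 u = 0" if "u \<odot> b = 0" "so_real_part u = 0" for u
    using that by blast
  obtain u0 where u0: "u0 \<odot> b = 0" "so_real_part u0 \<noteq> 0"
    using left_annihilator_real_part_nonzero[OF b] by blast
  define k where "k = so_polar I0 u0 / so_real_part u0"
  have polar_eq: "so_polar I0 u = k * so_real_part u" if u: "u \<odot> b = 0" for u
  proof -
    define c where "c = so_real_part u / so_real_part u0"
    have "(u - c *\<^sub>R u0) \<odot> b = 0" "so_real_part (u - c *\<^sub>R u0) = 0"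
      using u u0 by (simp_all add: c_def so_mult_diff_left)
    then have "so_polar I0 (u - c *\<^sub>R u0) = 0"
      by (rule H)
    then have "so_polar I0 u = c * so_polar I0 u0"
      by (simp add: so_polar_diff_right so_polar_scaleR_right)
    then show ?thesis by (simp add: c_def k_def)
  qed
  define w where "w = I0 - so_of_real k"
  have "so_polar (w \<odot> b) y = 0" for y
  proof -
    have "(y \<odot> so_cnj b) \<odot> b = 0"
      using b by (simp add: so_mult_cnj_mult_right)
    then have "so_polar I0 (y \<odot> so_cnj b) = k * so_real_part (y \<odot> so_cnj b)"
      by (rule polar_eq)
    then have "so_polar w (y \<odot> so_cnj b) = 0"
      by (simp add: w_def so_polar_diff_left so_polar_of_real_left)
    then show ?thesis
      by (simp add: so_polar_mult_cnj_right)
  qed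
  then have "w \<odot> b = 0"
    by (rule so_polar_eq_0_imp_eq_0)
  then have "so_qnorm w = 0"
    by (rule left_annihilator_isotropic[OF b(1)])
  moreover have "so_qnorm w = 1 + k * k"
    using I0 so_qnorm_add[of I0 "- so_of_real k"]
    by (simp add: w_def so_S_iff so_polar_commute[of I0] so_polar_of_real_left
        so_polar_minus_right)
  ultimately show False
    by (smt (verit) zero_le_square)
qed

lemma dim_imaginary_annihilator_plane:
  assumes b: "b \<noteq> 0" "so_qnorm b = 0" and I0: "I0 \<in> so_S"
  shows "dim {K. K \<odot> b = 0 \<and> so_real_part K = 0 \<and> so_polar I0 K = 0} = 2"
proof -
  define A where "A = {K. K \<odot> b = 0}"
  define A1 where "A1 = A \<inter> {K. so_real_part K = 0}"
  have lin_re: "linear so_real_part"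
    by (rule linearI) simp_all
  have lin_polar: "linear (so_polar I0)"
    by (rule linearI) (simp_all add: so_polar_add_right so_polar_scaleR_right)
  have subA1: "subspace A1"
    unfolding A1_def A_def
    using subspace_left_annihilator lin_re by (simp add: subspace_inter linear_subspace_kernel)
  obtain u0 where "u0 \<in> A" "so_real_part u0 \<noteq> 0"
    using left_annihilator_real_part_nonzero[OF b] unfolding A_def by blast
  then have "dim A1 + 1 = dim A"
    unfolding A1_def A_def using subspace_left_annihilator lin_re
    by (intro dim_Int_kernel_add_one) auto
  moreover obtain u1 where "u1 \<in> A1" "so_polar I0 u1 \<noteq> 0"
    using left_annihilator_imaginary_polar_nonzero[OF b I0] unfolding A1_def A_def by blast
  then have "dim (A1 \<inter> {K. so_polar I0 K = 0}) + 1 = dim A1"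
    by (rule dim_Int_kernel_add_one[OF subA1 lin_polar])
  moreover have "A1 \<inter> {K. so_polar I0 K = 0} = {K. K \<odot> b = 0 \<and> so_real_part K = 0 \<and> so_polar I0 K = 0}"
    by (auto simp: A_def A1_def)
  ultimately show ?thesis
    using dim_left_annihilator[OF b] unfolding A_def by simp
qed

lemma unit_roots_eq_translate:
  assumes b: "b \<noteq> 0" and I0: "I0 \<in> unit_roots a b"
  shows "unit_roots a b = (+) I0 ` {K. K \<odot> b = 0 \<and> so_real_part K = 0 \<and> so_polar I0 K = 0}"
proof -
  have I0S: "I0 \<in> so_S" and a: "a = - (I0 \<odot> b)"
    using I0 by (auto simp: unit_roots_def eq_neg_iff_add_eq_0 add.commute)
  let ?W = "{K. K \<odot> b = 0 \<and> so_real_part K = 0 \<and> so_polar I0 K = 0}"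
  have key: "I0 + K \<in> unit_roots a b \<longleftrightarrow> K \<in> ?W" for K
  proof (cases "K \<odot> b = 0")
    case True
    then have "so_qnorm (I0 + K) = 1 + 2 * so_polar I0 K"
      using I0S left_annihilator_isotropic[OF b True] by (simp add: so_qnorm_add so_S_iff)
    then show ?thesis
      using I0S True by (auto simp: unit_roots_def so_S_iff a so_mult_add_left)
  qed (simp add: unit_roots_def a so_mult_add_left)
  show ?thesis
  proof (intro set_eqI iffI)
    fix I assume "I \<in> unit_roots a b"
    then have "I - I0 \<in> ?W"
      using key[of "I - I0"] by simp
    then show "I \<in> (+) I0 ` ?W"
      by (rule rev_image_eqI) simp
  next
    fix I assume "I \<in> (+) I0 ` ?W"
    then show "I \<in> unit_roots a b"
      using key by blast
  qed
qed

lemma unit_roots_zero_divisor: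
  assumes b: "b \<noteq> 0" "so_qnorm b = 0" and \<beta>: "\<beta> \<noteq> 0"
  shows "unit_roots a b = {} \<or> affine_2plane (sphere_point \<alpha> \<beta> ` unit_roots a b)"
proof (cases "unit_roots a b = {}")
  case False
  then obtain I0 where I0: "I0 \<in> unit_roots a b" by blast
  define W where "W = {K. K \<odot> b = 0 \<and> so_real_part K = 0 \<and> so_polar I0 K = 0}"
  have W: "subspace W" "dim W = 2"
    using dim_imaginary_annihilator_plane[OF b, of I0] I0
    by (auto simp: W_def unit_roots_def subspace_def so_mult_add_left so_polar_add_right
        so_polar_scaleR_right)
  have "sphere_point \<alpha> \<beta> ` unit_roots a b = (+) (sphere_point \<alpha> \<beta> I0) ` ((*\<^sub>R) \<beta> ` W)"
    unfolding unit_roots_eq_translate[OF b(1) I0] W_def image_image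
    by (simp add: sphere_point_def scaleR_add_right add.assoc)
  moreover have "inj ((*\<^sub>R) \<beta> :: so \<Rightarrow> so)"
    using \<beta> by (auto intro: injI)
  ultimately have "affine_2plane (sphere_point \<alpha> \<beta> ` unit_roots a b)"
    using W unfolding affine_2plane_def
    by (simp add: affine_scaling subspace_imp_affine aff_dim_translation_eq aff_dim_subspace
        linear_scale_self flip: affine_translation)
  then show ?thesis ..
qed simp

lemma so_inverse_conj_sphere_point:
  assumes I: "I \<in> unit_roots a b" and \<beta>: "\<beta> \<noteq> 0" and b: "so_qnorm b \<noteq> 0"
  shows "so_inverse ((1 / \<beta>) *\<^sub>R b) \<odot> (so_cnj (sphere_point \<alpha> \<beta> I) \<odot> ((1 / \<beta>) *\<^sub>R b)) =
    sphere_point \<alpha> \<beta> (- (1 / so_qnorm b) *\<^sub>R (so_cnj a \<odot> b))"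
proof -
  have IS: "I \<in> so_S" and Ib: "I \<odot> b = - a"
    using I by (auto simp: unit_roots_def eq_neg_iff_add_eq_0 add.commute)
  have ab: "so_cnj b \<odot> a = - (so_cnj a \<odot> b)"
    using so_mult_cnj_add_commute[of "so_cnj b" "so_cnj a"] unit_roots_imp_balanced[OF I]
    by (simp add: balanced_def so_polar_commute eq_neg_iff_add_eq_0)
  have "so_cnj (sphere_point \<alpha> \<beta> I) \<odot> ((1 / \<beta>) *\<^sub>R b) = (\<alpha> / \<beta>) *\<^sub>R b + a"
    using \<beta> IS by (simp add: sphere_point_def so_S_cnj so_mult_diff_left Ib scaleR_add_right)
  moreover have "so_cnj b \<odot> ((\<alpha> / \<beta>) *\<^sub>R b + a) = so_of_real (\<alpha> / \<beta> * so_qnorm b) - so_cnj a \<odot> b"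
    by (simp add: so_mult_add_right so_cnj_mult_self ab flip: so_of_real_mult)
  moreover have "so_inverse ((1 / \<beta>) *\<^sub>R b) = (\<beta> / so_qnorm b) *\<^sub>R so_cnj b"
    using \<beta> b by (simp add: so_inverse_eq)
  moreover have "\<beta> / so_qnorm b * (\<alpha> / \<beta> * so_qnorm b) = \<alpha>"
    using \<beta> b by simp
  ultimately show ?thesis
    by (simp add: sphere_point_def scaleR_diff_right so_of_real_mult[symmetric])
qed

section \<open>The zeros of a slice function on one sphere\<close>

locale slice_on_sphere =
  fixes D :: "complex set" and F :: "complex \<Rightarrow> soC" and \<alpha> \<beta> :: real and J :: so
  assumes stem: "is_stem D F" and in_D: "Complex \<alpha> \<beta> \<in> D" and unit: "J \<in> so_S"
begin

abbreviation "F1 \<equiv> fst (F (Complex \<alpha> \<beta>))"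
abbreviation "F2 \<equiv> snd (F (Complex \<alpha> \<beta>))"
abbreviation "pt \<equiv> sphere_point \<alpha> \<beta> J"

lemma so_sphere_pt: "so_sphere pt = sphere_point \<alpha> \<beta> ` so_S"
  by (rule so_sphere_sphere_point[OF unit])

lemma so_sphere_pt_nonempty: "so_sphere pt \<noteq> {}"
  using so_S_nonempty by (simp add: so_sphere_pt)

lemma F2_real: "\<beta> = 0 \<Longrightarrow> F2 = 0"
  using is_stem_snd_real[OF stem] in_D by blast

lemma zeros_slice_pt: "zeros (slice D F) \<inter> so_sphere pt = sphere_point \<alpha> \<beta> ` unit_roots F1 F2"
  by (rule zeros_slice_sphere[OF stem in_D unit])

lemma zeros_slice_cnj_pt:
  "zeros (slice_cnj D F) \<inter> so_sphere pt = sphere_point \<alpha> \<beta> ` unit_roots (so_cnj F1) (so_cnj F2)"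
  unfolding slice_cnj_def
  using zeros_slice_sphere[OF is_stem_soC_cnj[OF stem] in_D unit] by (simp add: soC_cnj_eq)

lemma zeros_slice_N_pt:
  "zeros (slice_N D F) \<inter> so_sphere pt = (if balanced F1 F2 then so_sphere pt else {})"
proof -
  have "zeros (slice_N D F) \<inter> so_sphere pt =
    sphere_point \<alpha> \<beta> ` unit_roots (so_of_real (so_qnorm F1 - so_qnorm F2)) (so_of_real (2 * so_polar F1 F2))"
    unfolding slice_N_def
    using zeros_slice_sphere[OF is_stem_soC_mult_cnj[OF stem] in_D unit]
    by (simp add: soC_cnj_eq soC_mult_eq so_mult_cnj_self so_of_real_diff so_mult_cnj_add_commute)
  then show ?thesis
    by (simp add: unit_roots_of_real balanced_def so_sphere_pt)
qed

lemma so_sphere_pt_subset_zeros_slice_N_iff: "so_sphere pt \<subseteq> zeros (slice_N D F) \<longleftrightarrow> balanced F1 F2"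
  using zeros_slice_N_pt so_sphere_pt_nonempty by (auto split: if_splits)

lemma so_re_pt: "so_re pt = so_of_real \<alpha>"
proof -
  have "so_t pt = so_of_real (2 * \<alpha>)"
    using unit by (simp add: so_t_eq sphere_point_def so_S_iff)
  then show ?thesis
    by (simp add: so_re_def so_of_real_def)
qed

lemma sph_value_pt: "sph_value (slice D F) pt = F1"
proof -
  have "so_cnj pt = sphere_point \<alpha> \<beta> (- J)"
    using unit by (simp add: sphere_point_def so_S_cnj)
  then show ?thesis
    using slice_sphere_point[OF stem in_D] unit so_S_uminus[OF unit] is_stem_cnj_arg[OF stem in_D]
    by (simp add: sph_value_def slice_sphere_point[OF stem in_D] flip: scaleR_2)
qed

lemma sph_deriv_pt: "sph_deriv (slice D F) pt = (1 / \<beta>) *\<^sub>R F2"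
proof (cases "\<beta> = 0")
  case True
  then show ?thesis
    unfolding sph_deriv_def so_im_def so_re_pt by (simp add: sphere_point_def)
next
  case False
  have im: "so_im pt = \<beta> *\<^sub>R J"
    unfolding so_im_def so_re_pt by (simp add: sphere_point_def)
  have "so_inverse (\<beta> *\<^sub>R J) = - (1 / \<beta>) *\<^sub>R J"
    using False unit by (simp add: so_inverse_eq so_S_iff so_S_cnj)
  moreover have "so_cnj pt = sphere_point \<alpha> \<beta> (- J)"
    using unit by (simp add: sphere_point_def so_S_cnj)
  ultimately show ?thesis
    using False unit so_S_nonzero[OF unit] slice_sphere_point[OF stem in_D]
    by (simp add: sph_deriv_def im so_S_uminus so_S_mult_mult so_mult_diff_right flip: scaleR_2)
qed

lemma sph_deriv_pt_eq_0_iff: "sph_deriv (slice D F) pt = 0 \<longleftrightarrow> F2 = 0"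
  using F2_real by (auto simp: sph_deriv_pt)

lemma sph_deriv_pt_C_star_iff: "sph_deriv (slice D F) pt \<in> so_C_star \<longleftrightarrow> so_qnorm F2 \<noteq> 0"
  using F2_real by (auto simp: sph_deriv_pt so_C_star_iff)

lemma sph_deriv_pt_zero_divisor_iff:
  "so_zero_divisor (sph_deriv (slice D F) pt) \<longleftrightarrow> F2 \<noteq> 0 \<and> so_qnorm F2 = 0"
  using F2_real by (auto simp: sph_deriv_pt so_zero_divisor_iff)

lemma sph_deriv_pt_inverse:
  assumes F2: "so_qnorm F2 \<noteq> 0"
  shows "so_inverse (sph_deriv (slice D F) pt) = (\<beta> / so_qnorm F2) *\<^sub>R so_cnj F2"
proof -
  have \<beta>: "\<beta> \<noteq> 0"
    using F2 F2_real by force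
  have "so_inverse ((1 / \<beta>) *\<^sub>R F2) = (1 / so_qnorm ((1 / \<beta>) *\<^sub>R F2)) *\<^sub>R so_cnj ((1 / \<beta>) *\<^sub>R F2)"
    using \<beta> F2 by (intro so_inverse_eq) simp
  also have "\<dots> = (\<beta> / so_qnorm F2) *\<^sub>R so_cnj F2"
    using \<beta> F2 by (simp add: field_simps)
  finally show ?thesis
    by (simp add: sph_deriv_pt)
qed

lemma zeros_slice_cnj_pt_zero_divisor:
  assumes "F2 \<noteq> 0" "so_qnorm F2 = 0"
  shows "zeros (slice_cnj D F) \<inter> so_sphere pt = {} \<or> aff_dim (zeros (slice_cnj D F) \<inter> so_sphere pt) = 2"
  using unit_roots_zero_divisor[of "so_cnj F2" \<beta> "so_cnj F1" \<alpha>] assms F2_real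
  by (auto simp: zeros_slice_cnj_pt affine_2plane_def)

lemma zeros_sphere_cases:
  "zeros (slice D F) \<inter> so_sphere pt = {}
   \<or> (\<exists>y. zeros (slice D F) \<inter> so_sphere pt = {y} \<and> sph_deriv (slice D F) pt \<in> so_C_star
         \<and> y = so_re pt - sph_value (slice D F) pt \<odot> so_inverse (sph_deriv (slice D F) pt))
   \<or> (affine_2plane (zeros (slice D F) \<inter> so_sphere pt) \<and> so_zero_divisor (sph_deriv (slice D F) pt))
   \<or> (so_sphere pt \<subseteq> zeros (slice D F) \<and> sph_deriv (slice D F) pt = 0)"
proof -
  consider "F2 = 0" | "F2 \<noteq> 0" "so_qnorm F2 = 0" | "so_qnorm F2 \<noteq> 0"
    by fastforce
  then show ?thesis
  proof cases
    case 1
    show ?thesis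
    proof (cases "F1 = 0")
      case True
      then have "zeros (slice D F) \<inter> so_sphere pt = so_sphere pt"
        using 1 by (simp add: zeros_slice_pt unit_roots_zero_right so_sphere_pt[symmetric])
      then have "so_sphere pt \<subseteq> zeros (slice D F)"
        by blast
      then show ?thesis
        using 1 by (simp add: sph_deriv_pt_eq_0_iff)
    qed (simp add: 1 zeros_slice_pt unit_roots_zero_right)
  next
    case 2
    then have "\<beta> \<noteq> 0"
      using F2_real by blast
    then have "unit_roots F1 F2 = {} \<or> affine_2plane (sphere_point \<alpha> \<beta> ` unit_roots F1 F2)"
      by (rule unit_roots_zero_divisor[OF 2])
    then show ?thesis
      using 2 by (auto simp: zeros_slice_pt sph_deriv_pt_zero_divisor_iff)
  next
    case 3
    have "sphere_point \<alpha> \<beta> (- (1 / so_qnorm F2) *\<^sub>R (F1 \<odot> so_cnj F2)) =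
        so_re pt - sph_value (slice D F) pt \<odot> so_inverse (sph_deriv (slice D F) pt)"
      unfolding so_re_pt sph_value_pt sph_deriv_pt_inverse[OF 3] by (simp add: sphere_point_def)
    then show ?thesis
      using 3 by (auto simp: zeros_slice_pt unit_roots_invertible sph_deriv_pt_C_star_iff)
  qed
qed

lemma zeros_slice_N_cnj_if_no_zeros:
  assumes "zeros (slice D F) \<inter> so_sphere pt = {}"
  shows "(zeros (slice_N D F) \<inter> so_sphere pt = {} \<and> zeros (slice_cnj D F) \<inter> so_sphere pt = {})
    \<or> (so_sphere pt \<subseteq> zeros (slice_N D F) \<and>
        (zeros (slice_cnj D F) \<inter> so_sphere pt = {} \<or> aff_dim (zeros (slice_cnj D F) \<inter> so_sphere pt) = 2))"
proof (cases "balanced F1 F2")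
  case False
  then have "unit_roots (so_cnj F1) (so_cnj F2) = {}"
    using unit_roots_imp_balanced by fastforce
  with False show ?thesis
    by (simp add: zeros_slice_N_pt zeros_slice_cnj_pt)
next
  case True
  have roots: "unit_roots F1 F2 = {}"
    using assms by (simp add: zeros_slice_pt)
  consider "F2 = 0" | "F2 \<noteq> 0" "so_qnorm F2 = 0" | "so_qnorm F2 \<noteq> 0"
    by fastforce
  then have "zeros (slice_cnj D F) \<inter> so_sphere pt = {} \<or> aff_dim (zeros (slice_cnj D F) \<inter> so_sphere pt) = 2"
  proof cases
    case 1
    then show ?thesis
      using roots so_S_nonempty by (simp add: zeros_slice_cnj_pt unit_roots_zero_right split: if_splits)
  next
    case 2
    then show ?thesis by (rule zeros_slice_cnj_pt_zero_divisor)
  next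
    case 3
    then show ?thesis
      using roots True by (simp add: unit_roots_invertible)
  qed
  with True show ?thesis
    by (simp add: so_sphere_pt_subset_zeros_slice_N_iff)
qed

lemma zeros_slice_N_cnj_if_single_zero:
  assumes single: "zeros (slice D F) \<inter> so_sphere pt = {y}"
    and C: "sph_deriv (slice D F) pt \<in> so_C_star"
  shows "so_sphere pt \<subseteq> zeros (slice_N D F) \<and>
    zeros (slice_cnj D F) \<inter> so_sphere pt =
      {so_inverse (sph_deriv (slice D F) pt) \<odot> (so_cnj y \<odot> sph_deriv (slice D F) pt)}"
proof -
  have b: "so_qnorm F2 \<noteq> 0"
    using C by (simp add: sph_deriv_pt_C_star_iff)
  then have \<beta>: "\<beta> \<noteq> 0"
    using F2_real by force
  have "y \<in> sphere_point \<alpha> \<beta> ` unit_roots F1 F2"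
    using single by (simp add: zeros_slice_pt)
  then obtain I where I: "I \<in> unit_roots F1 F2" and y: "y = sphere_point \<alpha> \<beta> I"
    by blast
  have "balanced F1 F2"
    using I by (rule unit_roots_imp_balanced)
  moreover have "unit_roots (so_cnj F1) (so_cnj F2) = {- (1 / so_qnorm F2) *\<^sub>R (so_cnj F1 \<odot> F2)}"
    using b \<open>balanced F1 F2\<close> by (simp add: unit_roots_invertible)
  ultimately show ?thesis
    using so_inverse_conj_sphere_point[OF I \<beta> b, of \<alpha>]
    by (simp add: so_sphere_pt_subset_zeros_slice_N_iff zeros_slice_cnj_pt sph_deriv_pt y)
qed

lemma zeros_slice_N_cnj_if_plane:
  assumes "affine_2plane (zeros (slice D F) \<inter> so_sphere pt)"
    and "so_zero_divisor (sph_deriv (slice D F) pt)"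
  shows "so_sphere pt \<subseteq> zeros (slice_N D F) \<and>
    (zeros (slice_cnj D F) \<inter> so_sphere pt = {} \<or> aff_dim (zeros (slice_cnj D F) \<inter> so_sphere pt) = 2)"
proof -
  have "unit_roots F1 F2 \<noteq> {}"
    using assms(1) by (auto simp: affine_2plane_def zeros_slice_pt)
  then have "balanced F1 F2"
    using unit_roots_imp_balanced by blast
  then show ?thesis
    using zeros_slice_cnj_pt_zero_divisor assms(2)
    by (simp add: so_sphere_pt_subset_zeros_slice_N_iff sph_deriv_pt_zero_divisor_iff)
qed

lemma zeros_slice_N_cnj_if_sphere:
  assumes "so_sphere pt \<subseteq> zeros (slice D F)" and "sph_deriv (slice D F) pt = 0"
  shows "so_sphere pt \<subseteq> zeros (slice_cnj D F) \<and> so_sphere pt \<subseteq> zeros (slice_N D F)"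
proof -
  have "F2 = 0"
    using assms(2) by (simp add: sph_deriv_pt_eq_0_iff)
  moreover have "unit_roots F1 F2 \<noteq> {}"
    using assms(1) so_sphere_pt_nonempty zeros_slice_pt by blast
  ultimately have "F1 = 0"
    by (simp add: unit_roots_zero_right split: if_splits)
  with \<open>F2 = 0\<close> have "zeros (slice_cnj D F) \<inter> so_sphere pt = so_sphere pt"
    by (simp add: zeros_slice_cnj_pt unit_roots_zero_right so_sphere_pt[symmetric])
  with \<open>F1 = 0\<close> \<open>F2 = 0\<close> show ?thesis
    by (auto simp: so_sphere_pt_subset_zeros_slice_N_iff balanced_def)
qed

end

theorem proposition4p9:
  fixes D :: "complex set" and F :: "complex \<Rightarrow> soC" and x :: so
  assumes "D \<noteq> {}"
    and "\<forall>z\<in>D. cnj z \<in> D"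
    and "is_stem D F"
    and "x \<in> Omega D"
  defines "f \<equiv> slice D F" and "fc \<equiv> slice_cnj D F" and "Nf \<equiv> slice_N D F"
  shows "(zeros f \<inter> so_sphere x = {}
          \<or> (\<exists>y. zeros f \<inter> so_sphere x = {y} \<and> sph_deriv f x \<in> so_C_star
                \<and> y = so_re x - sph_value f x \<odot> so_inverse (sph_deriv f x))
          \<or> (affine_2plane (zeros f \<inter> so_sphere x) \<and> so_zero_divisor (sph_deriv f x))
          \<or> (so_sphere x \<subseteq> zeros f \<and> sph_deriv f x = 0))
       \<and> (zeros f \<inter> so_sphere x = {} \<longrightarrow>
            (zeros Nf \<inter> so_sphere x = {} \<and> zeros fc \<inter> so_sphere x = {})
          \<or> (so_sphere x \<subseteq> zeros Nf \<and>
              (zeros fc \<inter> so_sphere x = {} \<or> aff_dim (zeros fc \<inter> so_sphere x) = 2)))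
       \<and> (\<forall>y. zeros f \<inter> so_sphere x = {y} \<and> sph_deriv f x \<in> so_C_star
              \<and> y = so_re x - sph_value f x \<odot> so_inverse (sph_deriv f x) \<longrightarrow>
            so_sphere x \<subseteq> zeros Nf \<and>
            zeros fc \<inter> so_sphere x =
              {so_inverse (sph_deriv f x) \<odot> (so_cnj y \<odot> sph_deriv f x)})
       \<and> (affine_2plane (zeros f \<inter> so_sphere x) \<and> so_zero_divisor (sph_deriv f x) \<longrightarrow>
            so_sphere x \<subseteq> zeros Nf \<and>
            (zeros fc \<inter> so_sphere x = {} \<or> aff_dim (zeros fc \<inter> so_sphere x) = 2))
       \<and> (so_sphere x \<subseteq> zeros f \<and> sph_deriv f x = 0 \<longrightarrow>
            so_sphere x \<subseteq> zeros fc \<and> so_sphere x \<subseteq> zeros Nf)"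
proof -
  obtain \<alpha> \<beta> J where "Complex \<alpha> \<beta> \<in> D" "J \<in> so_S" and x: "x = sphere_point \<alpha> \<beta> J"
    using \<open>x \<in> Omega D\<close> unfolding Omega_def sphere_point_def by blast
  then interpret slice_on_sphere D F \<alpha> \<beta> J
    using \<open>is_stem D F\<close> by unfold_locales
  show ?thesis
    unfolding f_def fc_def Nf_def x
    by (intro conjI; ((rule impI allI)+)?; (elim conjE)?;
        rule zeros_sphere_cases zeros_slice_N_cnj_if_no_zeros zeros_slice_N_cnj_if_single_zero
          zeros_slice_N_cnj_if_plane zeros_slice_N_cnj_if_sphere; assumption)
qed

end
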